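(* There is an absolute constant $c>0$ such that for all $\varepsilon\in(0,\tfrac18)$, $\mathsf C_{\rm rand}(\varepsilon;\mathsf O^{1^{\rm st}})\ge c/\varepsilon$.
   Context: A function $f:\mathbb R^d\to\mathbb R$ is $\beta$-smooth if it is continuously differentiable and $\nabla f$ is $\beta$-Lipschitz. A point $x$ is an $\varepsilon$-stationary point of $f$ if $\|\nabla f(x)\|<\varepsilon$. Let $\mathcal F(\beta,\Delta,d)$ be the class of $\beta$-smooth $f:\mathbb R^d\to\mathbb R$ with $f(0)-\inf f\le\Delta$. The oracle $\mathsf O^{1^{\rm st}}$ returns $\nabla f(x)$ on query $x$; the oracle $\mathsf O^{0^{\rm th}+1^{\rm st}}$ returns $(f(x),\nabla f(x))$. A deterministic algorithm chooses queries $x_1,x_2,\dots\in\mathbb R^d$ where each $x_{i}$ is a (measurable) function of $x_1,\dots,x_{i-1}$ and the oracle responses at them; a randomized algorithm is the same except that each $x_i$ may also depend on a random seed $U$ independent of $f$. $\mathsf C_{\det}(\varepsilon;\beta,\Delta,d,\mathsf O)$ is the least $N$ such that some deterministic algorithm using $\mathsf O$ has, for every $f\in\mathcal F(\beta,\Delta,d)$, an $\varepsilon$-stationary point of $f$ among $x_1,\dots,x_N$; $\mathsf C_{\rm rand}(\varepsilon;\beta,\Delta,d,\mathsf O)$ is the least $N$ such that some randomized algorithm using $\mathsf O$ has, for every $f\in\mathcal F(\beta,\Delta,d)$, with probability at least $1/2$ an $\varepsilon$-stationary point of $f$ among $x_1,\dots,x_N$. Abbreviate $\mathsf C_*(\varepsilon;\mathsf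 O)=\mathsf C_*(\varepsilon;1,1,1,\mathsf O)$ (one-dimensional, $1$-smooth, objective gap at most $1$). *)

theory Defs
  imports "HOL-Probability.Probability"
begin

text \<open>One-dimensional setting (d = 1): the gradient of f at x is deriv f x.\<close>

definition smooth1 :: "real \<Rightarrow> (real \<Rightarrow> real) \<Rightarrow> bool" where
  "smooth1 \<beta> f \<longleftrightarrow> (\<forall>x. f differentiable (at x)) \<and>
     (\<forall>x y. \<bar>deriv f x - deriv f y\<bar> \<le> \<beta> * \<bar>x - y\<bar>)"

definition Fclass :: "real \<Rightarrow> real \<Rightarrow> (real \<Rightarrow> real) set" where
  "Fclass \<beta> \<Delta> = {f. smooth1 \<beta> f \<and> bdd_below (range f) \<and> f 0 - Inf (range f) \<le> \<Delta>}"

text \<open>A randomized first-order algorithm with seed space M: the i-th query (0-based)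
  is alg i u g, where u is the seed and g (restricted to {..<i}) the vector of
  oracle responses at the previous queries.\<close>

definition rand_alg :: "'u measure \<Rightarrow> (nat \<Rightarrow> 'u \<Rightarrow> (nat \<Rightarrow> real) \<Rightarrow> real) \<Rightarrow> bool" where
  "rand_alg M alg \<longleftrightarrow> prob_space M \<and>
     (\<forall>i. (\<lambda>(u, g). alg i u g) \<in> M \<Otimes>\<^sub>M PiM {..<i} (\<lambda>_. borel) \<rightarrow>\<^sub>M borel)"

fun queries :: "(nat \<Rightarrow> 'u \<Rightarrow> (nat \<Rightarrow> real) \<Rightarrow> real) \<Rightarrow> (real \<Rightarrow> real) \<Rightarrow> 'u \<Rightarrow> nat \<Rightarrow> real list" where
  "queries alg f u 0 = []"
| "queries alg f u (Suc n) =
     (let xs = queries alg f u n in xs @ [alg n u (\<lambda>j\<in>{..<n}. deriv f (xs ! j))])"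

text \<open>Randomized complexity C_rand(eps; beta, Delta, 1, O^1st), with the random seed
  drawn from an arbitrary probability distribution on the reals (Borel sets);
  infinity if no N works.\<close>
definition C_rand :: "real \<Rightarrow> real \<Rightarrow> real \<Rightarrow> enat" where
  "C_rand \<epsilon> \<beta> \<Delta> = Inf (enat ` {N. \<exists>(M :: real measure) alg.
      sets M = sets borel \<and> rand_alg M alg \<and>
      (\<forall>f\<in>Fclass \<beta> \<Delta>.
         measure M {u \<in> space M. \<exists>i<N. \<bar>deriv f (queries alg f u N ! i)\<bar> < \<epsilon>} \<ge> 1/2)})"

end

theory Submission
  imports Defs
begin

text \<open>
  The hard instances are \<open>f = hard_fun g \<phi> L R\<close>: their gradient is \<open>-g\<close>, except on tent-shaped
  bumps of height \<open>1/2\<close> centred at \<open>\<phi> + L/2 + k L\<close> and on a ramp from \<open>-g\<close> to \<open>g\<close> over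
  \<open>[R, R + 2g]\<close>. With \<open>g L = 1/8\<close> each bump gains at least what the slope loses over a period,
  so \<open>f\<close> is bounded below, and \<open>\<epsilon>\<close>-stationary points (\<open>\<epsilon> \<le> g\<close>) lie only on bumps or on the ramp.
  As long as an algorithm avoids these regions it receives the responses of the sign oracle
  \<open>x \<mapsto> \<plusminus>g\<close> (sign of \<open>x - R\<close>), so its queries are those of its run against that oracle.
  For a fixed seed, every such query lies on bumps of at most one phase \<open>\<phi>\<close>, and since the
  \<open>i\<close>-th query depends only on \<open>i\<close> signs, it lies on the ramp for at most \<open>2^i\<close> integer values of
  \<open>R\<close>. So one seed succeeds on at most \<open>J N + L 2^N\<close> of the \<open>L J\<close> instances; averaging over the
  seed with \<open>J = 8 \<cdot> 2^N\<close> gives \<open>N \<ge> 3L/8\<close>, and \<open>L \<approx> 1/(8\<epsilon>)\<close> yields the bound.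
\<close>

section \<open>Query transcripts against an arbitrary oracle\<close>

fun oracle_queries ::
    "(nat \<Rightarrow> 'u \<Rightarrow> (nat \<Rightarrow> real) \<Rightarrow> real) \<Rightarrow> (real \<Rightarrow> real) \<Rightarrow> 'u \<Rightarrow> nat \<Rightarrow> real list" where
  "oracle_queries alg r u 0 = []"
| "oracle_queries alg r u (Suc n) =
     (let xs = oracle_queries alg r u n in xs @ [alg n u (\<lambda>j\<in>{..<n}. r (xs ! j))])"

lemma queries_eq_oracle_queries: "queries alg f u n = oracle_queries alg (deriv f) u n"
  by (induction n) (simp_all add: Let_def)

lemma length_oracle_queries [simp]: "length (oracle_queries alg r u n) = n"
  by (induction n) (simp_all add: Let_def)

lemma oracle_queries_Suc:
  "oracle_queries alg r u (Suc n) =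
     oracle_queries alg r u n @ [alg n u (\<lambda>j\<in>{..<n}. r (oracle_queries alg r u n ! j))]"
  by (simp add: Let_def)

declare oracle_queries.simps(2) [simp del]

lemma take_oracle_queries:
  "m \<le> n \<Longrightarrow> take m (oracle_queries alg r u n) = oracle_queries alg r u m"
  by (induction n) (auto simp: oracle_queries_Suc le_Suc_eq)

lemma nth_oracle_queries:
  assumes "i < n"
  shows "oracle_queries alg r u n ! i = oracle_queries alg r u (Suc i) ! i"
proof -
  have "take (Suc i) (oracle_queries alg r u n) = oracle_queries alg r u (Suc i)"
    using assms by (intro take_oracle_queries) simp
  then show ?thesis
    by (metis lessI nth_take)
qed

lemma oracle_queries_Suc_eqI:
  assumes "oracle_queries alg r1 u n = oracle_queries alg r2 u n"
    and "map r1 (oracle_queries alg r1 u n) = map r2 (oracle_queries alg r2 u n)"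
  shows "oracle_queries alg r1 u (Suc n) = oracle_queries alg r2 u (Suc n)"
proof -
  have "(\<lambda>j\<in>{..<n}. r1 (oracle_queries alg r1 u n ! j)) = (\<lambda>j\<in>{..<n}. r2 (oracle_queries alg r2 u n ! j))"
    using assms(2) by (intro restrict_ext) (metis lessThan_iff length_oracle_queries nth_map)
  then show ?thesis
    using assms(1) by (simp add: oracle_queries_Suc)
qed

lemma oracle_queries_cong:
  "(\<And>x. x \<in> set (oracle_queries alg r1 u n) \<Longrightarrow> r1 x = r2 x) \<Longrightarrow>
     oracle_queries alg r1 u n = oracle_queries alg r2 u n"
proof (induction n)
  case (Suc n)
  have prefix: "set (oracle_queries alg r1 u n) \<subseteq> set (oracle_queries alg r1 u (Suc n))"
    by (auto simp: oracle_queries_Suc)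
  then have eq: "oracle_queries alg r1 u n = oracle_queries alg r2 u n"
    using Suc by blast
  have "map r1 (oracle_queries alg r1 u n) = map r2 (oracle_queries alg r1 u n)"
    using Suc.prems prefix by (intro map_cong) auto
  then show ?case
    using eq by (intro oracle_queries_Suc_eqI) simp_all
qed simp

lemma oracle_queries_eq_if_responses_eq:
  "map r1 (oracle_queries alg r1 u n) = map r2 (oracle_queries alg r2 u n) \<Longrightarrow>
     oracle_queries alg r1 u (Suc n) = oracle_queries alg r2 u (Suc n)"
proof (induction n)
  case (Suc n)
  have "map r1 (oracle_queries alg r1 u n) = map r2 (oracle_queries alg r2 u n)"
    using Suc.prems by (simp add: oracle_queries_Suc)
  then have "oracle_queries alg r1 u (Suc n) = oracle_queries alg r2 u (Suc n)"
    by (rule Suc.IH)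
  then show ?case
    using Suc.prems
    by (rule oracle_queries_Suc_eqI)
qed (simp add: oracle_queries_Suc restrict_def)

section \<open>Antiderivatives\<close>

definition antideriv :: "(real \<Rightarrow> real) \<Rightarrow> real \<Rightarrow> real" where
  "antideriv p x = integral {0..x} p - integral {x..0} p"

lemma antideriv_eq_integral_from:
  assumes "continuous_on UNIV p" "a \<le> 0" "a \<le> x"
  shows "antideriv p x = integral {a..x} p - integral {a..0} p"
proof -
  have integrable: "p integrable_on {a..b}" for b
    using assms(1) by (meson continuous_on_subset integrable_continuous_real subset_UNIV)
  show ?thesis
  proof (cases "0 \<le> x")
    case True
    then have "integral {a..0} p + integral {0..x} p = integral {a..x} p"
      using assms integrable by (intro Henstock_Kurzweil_Integration.integral_combine) auto
    moreover have "integral {x..0} p = 0"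
      using True by (cases "x = 0") auto
    ultimately show ?thesis
      unfolding antideriv_def by simp
  next
    case False
    then have "integral {a..x} p + integral {x..0} p = integral {a..0} p"
      using assms integrable by (intro Henstock_Kurzweil_Integration.integral_combine) auto
    moreover have "integral {0..x} p = 0"
      using False by auto
    ultimately show ?thesis
      unfolding antideriv_def by simp
  qed
qed

lemma has_real_derivative_antideriv:
  assumes "continuous_on UNIV p"
  shows "(antideriv p has_real_derivative p x) (at x)"
proof -
  define a where "a = min 0 x - 1"
  have interior: "x \<in> interior {a..x + 1}"
    unfolding a_def by simp
  have "((\<lambda>u. integral {a..u} p) has_real_derivative p x) (at x within {a..x + 1})"
    unfolding a_def by (intro integral_has_real_derivative continuous_on_subset[OF assms]) auto
  then have "((\<lambda>u. integral {a..u} p) has_real_derivative p x) (at x)"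
    unfolding at_within_interior[OF interior] .
  then have "((\<lambda>u. integral {a..u} p - integral {a..0} p) has_real_derivative p x) (at x)"
    using DERIV_diff[OF _ DERIV_const[of "integral {a..0} p"]] by simp
  then show ?thesis
  proof (rule has_field_derivative_transform_within_open)
    show "open {a<..}" "x \<in> {a<..}"
      unfolding a_def by auto
    show "integral {a..u} p - integral {a..0} p = antideriv p u" if "u \<in> {a<..}" for u
    proof -
      have "a \<le> 0" "a \<le> u"
        using that unfolding a_def by auto
      then show ?thesis
        by (simp add: antideriv_eq_integral_from[OF assms])
    qed
  qed
qed

lemma mult_diff_le_of_deriv_ge:
  fixes F F' :: "real \<Rightarrow> real"
  assumes "a \<le> b" "\<And>t. a \<le> t \<Longrightarrow> t \<le> b \<Longrightarrow> (F has_real_derivative F' t) (at t)"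
    and "\<And>t. a \<le> t \<Longrightarrow> t \<le> b \<Longrightarrow> m \<le> F' t"
  shows "m * (b - a) \<le> F b - F a"
proof -
  have "F a - m * a \<le> F b - m * b"
  proof (rule DERIV_nonneg_imp_nondecreasing[OF assms(1)])
    fix t assume t: "a \<le> t" "t \<le> b"
    show "\<exists>y. ((\<lambda>x. F x - m * x) has_real_derivative y) (at t) \<and> 0 \<le> y"
      using assms(2,3)[OF t] by (intro exI[of _ "F' t - m"]) (auto intro!: derivative_eq_intros)
  qed
  then show ?thesis
    by (simp add: algebra_simps)
qed

section \<open>The hard functions\<close>

definition bump_centres :: "real \<Rightarrow> real \<Rightarrow> real set" where
  "bump_centres \<phi> L = range (\<lambda>k::nat. \<phi> + L/2 + real k * L)"

definition bump :: "real \<Rightarrow> real \<Rightarrow> real \<Rightarrow> real" where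
  "bump \<phi> L x = max 0 (1/2 - infdist x (bump_centres \<phi> L))"

definition near_bumps :: "real \<Rightarrow> real \<Rightarrow> real \<Rightarrow> bool" where
  "near_bumps \<phi> L x \<longleftrightarrow> (\<exists>k::nat. \<bar>x - (\<phi> + L/2 + real k * L)\<bar> < 1/2)"

definition sign_oracle :: "real \<Rightarrow> real \<Rightarrow> real \<Rightarrow> real" where
  "sign_oracle g R x = (if x \<le> R then -g else g)"

definition in_ramp :: "real \<Rightarrow> real \<Rightarrow> real \<Rightarrow> bool" where
  "in_ramp g R x \<longleftrightarrow> R < x \<and> x < R + 2*g"

definition hard_deriv :: "real \<Rightarrow> real \<Rightarrow> real \<Rightarrow> real \<Rightarrow> real \<Rightarrow> real" where
  "hard_deriv g \<phi> L R x = max (-g + bump \<phi> L x) (min g (-g + (x - R)))"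

definition hard_fun :: "real \<Rightarrow> real \<Rightarrow> real \<Rightarrow> real \<Rightarrow> real \<Rightarrow> real" where
  "hard_fun g \<phi> L R = antideriv (hard_deriv g \<phi> L R)"

lemma bump_lipschitz: "\<bar>bump \<phi> L x - bump \<phi> L y\<bar> \<le> \<bar>x - y\<bar>"
  using infdist_triangle_abs[of x "bump_centres \<phi> L" y]
  unfolding bump_def dist_real_def by linarith

lemma bump_nonneg: "0 \<le> bump \<phi> L x"
  unfolding bump_def by simp

lemma bump_eq_0:
  assumes "\<not> near_bumps \<phi> L x"
  shows "bump \<phi> L x = 0"
proof -
  have nonempty: "bump_centres \<phi> L \<noteq> {}"
    unfolding bump_centres_def by simp
  have "1/2 \<le> infdist x (bump_centres \<phi> L)"
    unfolding infdist_notempty[OF nonempty]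
    by (rule cINF_greatest[OF nonempty])
      (use assms in \<open>auto simp: near_bumps_def bump_centres_def dist_real_def not_less\<close>)
  then show ?thesis
    unfolding bump_def by simp
qed

lemma bump_ge_quarter:
  assumes "\<bar>x - (\<phi> + L/2 + real k * L)\<bar> \<le> 1/4"
  shows "1/4 \<le> bump \<phi> L x"
proof -
  have "infdist x (bump_centres \<phi> L) \<le> 1/4"
    using assms by (intro infdist_le2[of "\<phi> + L/2 + real k * L"])
      (auto simp: bump_centres_def dist_real_def)
  then show ?thesis
    unfolding bump_def by simp
qed

lemma not_near_bumps_if_nonpos:
  assumes "x \<le> 0" "0 \<le> \<phi>" "1 \<le> L"
  shows "\<not> near_bumps \<phi> L x"
proof -
  have "1/2 \<le> \<bar>x - (\<phi> + L/2 + real k * L)\<bar>" for k :: nat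
  proof -
    have "0 \<le> real k * L"
      using assms by simp
    then show ?thesis
      using assms by linarith
  qed
  then show ?thesis
    unfolding near_bumps_def by (simp add: not_less)
qed

lemma hard_deriv_lipschitz: "\<bar>hard_deriv g \<phi> L R x - hard_deriv g \<phi> L R y\<bar> \<le> \<bar>x - y\<bar>"
  using bump_lipschitz[of \<phi> L x y] unfolding hard_deriv_def by linarith

lemma continuous_on_hard_deriv: "continuous_on UNIV (hard_deriv g \<phi> L R)"
  unfolding hard_deriv_def bump_def by (intro continuous_intros)

lemma hard_deriv_ge_bump: "-g + bump \<phi> L x \<le> hard_deriv g \<phi> L R x"
  unfolding hard_deriv_def by simp

lemma hard_deriv_ge: "-g \<le> hard_deriv g \<phi> L R x"
  using hard_deriv_ge_bump[of g \<phi> L x R] bump_nonneg[of \<phi> L x] by linarith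

lemma hard_deriv_eq_sign_oracle:
  assumes "0 < g" "\<not> near_bumps \<phi> L x" "\<not> in_ramp g R x"
  shows "hard_deriv g \<phi> L R x = sign_oracle g R x"
  using assms bump_eq_0[OF assms(2)]
  unfolding hard_deriv_def sign_oracle_def in_ramp_def by (auto simp: max_def min_def)

lemma has_real_derivative_hard_fun:
  "(hard_fun g \<phi> L R has_real_derivative hard_deriv g \<phi> L R x) (at x)"
  unfolding hard_fun_def by (rule has_real_derivative_antideriv[OF continuous_on_hard_deriv])

lemma deriv_hard_fun: "deriv (hard_fun g \<phi> L R) x = hard_deriv g \<phi> L R x"
  by (rule DERIV_imp_deriv[OF has_real_derivative_hard_fun])

lemma hard_fun_diff_ge:
  assumes "a \<le> b" "\<And>t. a \<le> t \<Longrightarrow> t \<le> b \<Longrightarrow> m \<le> hard_deriv g \<phi> L R t"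
  shows "m * (b - a) \<le> hard_fun g \<phi> L R b - hard_fun g \<phi> L R a"
  using assms(1) has_real_derivative_hard_fun assms(2) by (rule mult_diff_le_of_deriv_ge)

lemma hard_fun_diff_ge_neg:
  "a \<le> b \<Longrightarrow> -g * (b - a) \<le> hard_fun g \<phi> L R b - hard_fun g \<phi> L R a"
  by (rule hard_fun_diff_ge) (auto intro: hard_deriv_ge)

lemma hard_fun_period_mono:
  assumes "g * L = 1/8" "1 \<le> L"
  shows "hard_fun g \<phi> L R (\<phi> + real k * L) \<le> hard_fun g \<phi> L R (\<phi> + real (Suc k) * L)"
proof -
  let ?f = "hard_fun g \<phi> L R"
  define a where "a = \<phi> + real k * L"
  define c where "c = a + L/2"
  have "-g * ((c - 1/4) - a) \<le> ?f (c - 1/4) - ?f a"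
    using assms unfolding c_def by (intro hard_fun_diff_ge_neg) simp
  moreover have "(1/4 - g) * ((c + 1/4) - (c - 1/4)) \<le> ?f (c + 1/4) - ?f (c - 1/4)"
  proof (rule hard_fun_diff_ge)
    fix t assume "c - 1/4 \<le> t" "t \<le> c + 1/4"
    then have "\<bar>t - (\<phi> + L/2 + real k * L)\<bar> \<le> 1/4"
      unfolding c_def a_def abs_le_iff by linarith
    then have "1/4 \<le> bump \<phi> L t"
      by (rule bump_ge_quarter)
    then show "1/4 - g \<le> hard_deriv g \<phi> L R t"
      using hard_deriv_ge_bump[of g \<phi> L t R] by linarith
  qed simp
  moreover have "-g * ((a + L) - (c + 1/4)) \<le> ?f (a + L) - ?f (c + 1/4)"
    using assms unfolding c_def by (intro hard_fun_diff_ge_neg) simp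
  moreover have "a + L = \<phi> + real (Suc k) * L"
    unfolding a_def by (simp add: algebra_simps)
  ultimately show ?thesis
    using assms(1) unfolding a_def c_def by (simp add: algebra_simps)
qed

lemma hard_fun_periods_mono:
  assumes "g * L = 1/8" "1 \<le> L"
  shows "hard_fun g \<phi> L R \<phi> \<le> hard_fun g \<phi> L R (\<phi> + real k * L)"
proof (induction k)
  case (Suc k)
  then show ?case
    using hard_fun_period_mono[OF assms, of \<phi> R k] by linarith
qed simp

lemma hard_deriv_eq_if_nonpos:
  assumes "0 \<le> g" "0 \<le> \<phi>" "1 \<le> L" "0 \<le> R" "x \<le> 0"
  shows "hard_deriv g \<phi> L R x = -g"
  using assms bump_eq_0[OF not_near_bumps_if_nonpos[of x \<phi> L]] unfolding hard_deriv_def by simp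

lemma hard_fun_ge:
  assumes "g * L = 1/8" "1 \<le> L" "0 \<le> \<phi>" "\<phi> \<le> L" "0 \<le> R"
  shows "hard_fun g \<phi> L R 0 - 1/4 \<le> hard_fun g \<phi> L R y"
proof -
  let ?f = "hard_fun g \<phi> L R"
  have "0 < g"
    using assms(1,2) zero_less_mult_iff[of g L] by auto
  have "g * \<phi> \<le> g * L"
    using assms(4) \<open>0 < g\<close> by simp
  then have g\<phi>: "g * \<phi> \<le> 1/8"
    using assms(1) by simp
  consider "y \<le> 0" | "0 \<le> y" "y < \<phi>" | "\<phi> \<le> y"
    by linarith
  then show ?thesis
  proof cases
    case 1
    have "?f 0 \<le> ?f y"
    proof (rule DERIV_nonpos_imp_nonincreasing[OF 1])
      fix t assume "y \<le> t" "t \<le> 0"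
      then have "hard_deriv g \<phi> L R t = -g"
        using assms \<open>0 < g\<close> by (intro hard_deriv_eq_if_nonpos) auto
      then show "\<exists>d. (?f has_real_derivative d) (at t) \<and> d \<le> 0"
        using \<open>0 < g\<close> has_real_derivative_hard_fun by fastforce
    qed
    then show ?thesis
      by simp
  next
    case 2
    have "-g * (y - 0) \<le> ?f y - ?f 0"
      using 2 by (intro hard_fun_diff_ge_neg) simp
    moreover have "g * y \<le> g * \<phi>"
      using 2 \<open>0 < g\<close> by simp
    ultimately show ?thesis
      using g\<phi> by simp
  next
    case 3
    define k where "k = nat \<lfloor>(y - \<phi>) / L\<rfloor>"
    have "real k = \<lfloor>(y - \<phi>) / L\<rfloor>"
      unfolding k_def using 3 assms(2) by simp
    then have "real k \<le> (y - \<phi>) / L" "(y - \<phi>) / L < real k + 1"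
      by linarith+
    then have below: "\<phi> + real k * L \<le> y" and above: "y - (\<phi> + real k * L) \<le> L"
      using assms(2) by (simp_all add: field_simps)
    have "-g * (\<phi> - 0) \<le> ?f \<phi> - ?f 0"
      using assms(3) by (rule hard_fun_diff_ge_neg)
    moreover have "?f \<phi> \<le> ?f (\<phi> + real k * L)"
      using assms(1,2) by (rule hard_fun_periods_mono)
    moreover have "-g * (y - (\<phi> + real k * L)) \<le> ?f y - ?f (\<phi> + real k * L)"
      using below by (rule hard_fun_diff_ge_neg)
    moreover have "g * (y - (\<phi> + real k * L)) \<le> g * L"
      using above \<open>0 < g\<close> by simp
    ultimately show ?thesis
      using g\<phi> assms(1) by simp
  qed
qed

lemma hard_fun_in_Fclass:
  assumes "g * L = 1/8" "1 \<le> L" "0 \<le> \<phi>" "\<phi> \<le> L" "0 \<le> R"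
  shows "hard_fun g \<phi> L R \<in> Fclass 1 1"
proof -
  let ?f = "hard_fun g \<phi> L R"
  have "?f differentiable (at x)" for x
    using has_real_derivative_hard_fun real_differentiable_def by blast
  then have "smooth1 1 ?f"
    unfolding smooth1_def deriv_hard_fun using hard_deriv_lipschitz by simp
  moreover have lower: "?f 0 - 1/4 \<le> ?f y" for y
    using assms by (rule hard_fun_ge)
  then have "bdd_below (range ?f)"
    by (intro bdd_belowI2)
  moreover have "?f 0 - 1/4 \<le> Inf (range ?f)"
    using lower by (intro cInf_greatest) auto
  ultimately show ?thesis
    unfolding Fclass_def by simp
qed

section \<open>Instances solved by a single seed\<close>

definition finds_stationary ::
    "(nat \<Rightarrow> 'u \<Rightarrow> (nat \<Rightarrow> real) \<Rightarrow> real) \<Rightarrow> (real \<Rightarrow> real) \<Rightarrow> real \<Rightarrow> nat \<Rightarrow> 'u \<Rightarrow> bool" where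
  "finds_stationary alg f \<epsilon> N u \<longleftrightarrow> (\<exists>i<N. \<bar>deriv f (queries alg f u N ! i)\<bar> < \<epsilon>)"

lemma finds_stationary_hard_fun_imp_sign_query_near_bumps_or_in_ramp:
  assumes "\<epsilon> \<le> g" "finds_stationary alg (hard_fun g \<phi> L R) \<epsilon> N u"
  shows "\<exists>i<N. near_bumps \<phi> L (oracle_queries alg (sign_oracle g R) u N ! i) \<or>
                in_ramp g R (oracle_queries alg (sign_oracle g R) u N ! i)"
proof (rule ccontr)
  let ?f = "hard_fun g \<phi> L R"
  let ?xs = "oracle_queries alg (sign_oracle g R) u N"
  assume far: "\<not> ?thesis"
  obtain i where i: "i < N" "\<bar>deriv ?f (queries alg ?f u N ! i)\<bar> < \<epsilon>"
    using assms(2) unfolding finds_stationary_def by blast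
  then have "0 < g"
    using assms(1) by linarith
  have agree: "deriv ?f y = sign_oracle g R y" if y: "y \<in> set ?xs" for y
  proof -
    obtain i where "i < N" "y = ?xs ! i"
      using y by (auto simp: in_set_conv_nth)
    with far have "\<not> near_bumps \<phi> L y" "\<not> in_ramp g R y"
      by blast+
    then show ?thesis
      unfolding deriv_hard_fun by (rule hard_deriv_eq_sign_oracle[OF \<open>0 < g\<close>])
  qed
  then have "?xs = oracle_queries alg (deriv ?f) u N"
    by (intro oracle_queries_cong) simp
  then have "queries alg ?f u N ! i \<in> set ?xs"
    using i(1) by (simp add: queries_eq_oracle_queries)
  then have "\<bar>deriv ?f (queries alg ?f u N ! i)\<bar> = g"
    using agree \<open>0 < g\<close> by (simp add: sign_oracle_def)
  with i(2) assms(1) show False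
    by simp
qed

lemma card_ramp_hits_at_step:
  assumes "g \<le> 1/2"
  shows "card {j\<in>{..<J}. in_ramp g (real j) (oracle_queries alg (sign_oracle g (real j)) u (Suc i) ! i)}
    \<le> 2^i"
    (is "card ?V \<le> _")
proof -
  let ?responses = "\<lambda>j. map (sign_oracle g (real j)) (oracle_queries alg (sign_oracle g (real j)) u i)"
  have "inj_on ?responses ?V"
  proof (rule inj_onI)
    fix j1 j2 assume "j1 \<in> ?V" "j2 \<in> ?V" "?responses j1 = ?responses j2"
    then have "oracle_queries alg (sign_oracle g (real j1)) u (Suc i) =
               oracle_queries alg (sign_oracle g (real j2)) u (Suc i)"
      by (intro oracle_queries_eq_if_responses_eq)
    with \<open>j1 \<in> ?V\<close> \<open>j2 \<in> ?V\<close> have "real j1 < real j2 + 1" "real j2 < real j1 + 1"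
      using assms by (auto simp: in_ramp_def)
    then show "j1 = j2"
      by linarith
  qed
  then have "card ?V = card (?responses ` ?V)"
    by (rule card_image[symmetric])
  also have "\<dots> \<le> card {xs. set xs \<subseteq> {-g, g} \<and> length xs = i}"
    by (intro card_mono finite_lists_length_eq) (auto simp: sign_oracle_def)
  also have "\<dots> \<le> 2^i"
  proof -
    have "card {-g, g} \<le> 2"
      by (cases "g = 0") simp_all
    then show ?thesis
      by (simp add: card_lists_length_eq power_mono)
  qed
  finally show ?thesis .
qed

lemma card_ramp_hits:
  assumes "g \<le> 1/2"
  shows "card {j\<in>{..<J}. \<exists>i<N. in_ramp g (real j) (oracle_queries alg (sign_oracle g (real j)) u N ! i)}
    \<le> 2^N"
proof -
  define V where
    "V i = {j\<in>{..<J}. in_ramp g (real j) (oracle_queries alg (sign_oracle g (real j)) u (Suc i) ! i)}" for i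
  have "card {j\<in>{..<J}. \<exists>i<N. in_ramp g (real j) (oracle_queries alg (sign_oracle g (real j)) u N ! i)}
      \<le> card (\<Union>i<N. V i)"
    by (intro card_mono) (auto simp: V_def nth_oracle_queries[of _ N])
  also have "\<dots> \<le> (\<Sum>i<N. card (V i))"
    by (rule card_UN_le) simp
  also have "\<dots> \<le> (\<Sum>i<N. 2^i)"
    unfolding V_def by (intro sum_mono card_ramp_hits_at_step assms)
  also have "\<dots> \<le> 2^N"
    by (induction N) auto
  finally show ?thesis .
qed

lemma card_phases_near_bumps_le_1:
  fixes L :: nat
  assumes "1 \<le> L"
  shows "card {\<phi>\<in>{..<L}. near_bumps (real \<phi>) (real L) x} \<le> 1"
    (is "card ?S \<le> 1")
proof -
  have "\<phi>1 = \<phi>2"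
    if "\<phi>1 < L" "\<phi>2 < L" "\<bar>x - (real \<phi>1 + real L/2 + real k1 * real L)\<bar> < 1/2"
      "\<bar>x - (real \<phi>2 + real L/2 + real k2 * real L)\<bar> < 1/2" for \<phi>1 \<phi>2 k1 k2 :: nat
  proof -
    from that have "\<bar>real (\<phi>1 + k1 * L) - real (\<phi>2 + k2 * L)\<bar> < 1"
      unfolding of_nat_add of_nat_mult by linarith
    then have "\<phi>1 + k1 * L = \<phi>2 + k2 * L"
      by linarith
    then have "(\<phi>1 + k1 * L) mod L = (\<phi>2 + k2 * L) mod L"
      by simp
    with that show "\<phi>1 = \<phi>2"
      by simp
  qed
  then have "\<forall>a1\<in>?S. \<forall>a2\<in>?S. a1 = a2"
    unfolding near_bumps_def by blast
  then show ?thesis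
    using card_le_Suc0_iff_eq[of ?S] by simp
qed

lemma card_finds_stationary_hard_fun:
  fixes L J :: nat
  assumes "1 \<le> L" "g \<le> 1/2" "\<epsilon> \<le> g"
  shows "card {(\<phi>, j) \<in> {..<L} \<times> {..<J}.
           finds_stationary alg (hard_fun g (real \<phi>) (real L) (real j)) \<epsilon> N u} \<le> J * N + L * 2^N"
    (is "card ?S \<le> _")
proof -
  let ?x = "\<lambda>j i. oracle_queries alg (sign_oracle g (real j)) u N ! i"
  define H where "H j = (\<Union>i<N. {\<phi>\<in>{..<L}. near_bumps (real \<phi>) (real L) (?x j i)})" for j
  define V where "V = {j\<in>{..<J}. \<exists>i<N. in_ramp g (real j) (?x j i)}"
  have finite_H: "finite (H j)" for j
    unfolding H_def by simp
  have "?S \<subseteq> (\<Union>j<J. (\<lambda>\<phi>. (\<phi>, j)) ` H j) \<union> ({..<L} \<times> V)"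
  proof
    fix p assume "p \<in> ?S"
    then obtain \<phi> j where p: "p = (\<phi>, j)" "\<phi> < L" "j < J"
      and stationary: "finds_stationary alg (hard_fun g (real \<phi>) (real L) (real j)) \<epsilon> N u"
      by blast
    obtain i where "i < N" "near_bumps (real \<phi>) (real L) (?x j i) \<or> in_ramp g (real j) (?x j i)"
      using finds_stationary_hard_fun_imp_sign_query_near_bumps_or_in_ramp[OF assms(3) stationary]
      by blast
    then have "\<phi> \<in> H j \<or> j \<in> V"
      unfolding H_def V_def using p by auto
    then show "p \<in> (\<Union>j<J. (\<lambda>\<phi>. (\<phi>, j)) ` H j) \<union> ({..<L} \<times> V)"
      using p by blast
  qed
  then have "card ?S \<le> card ((\<Union>j<J. (\<lambda>\<phi>. (\<phi>, j)) ` H j) \<union> ({..<L} \<times> V))"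
    by (rule card_mono[rotated]) (simp add: finite_H V_def)
  also have "\<dots> \<le> card (\<Union>j<J. (\<lambda>\<phi>. (\<phi>, j)) ` H j) + card ({..<L} \<times> V)"
    by (rule card_Un_le)
  also have "card (\<Union>j<J. (\<lambda>\<phi>. (\<phi>, j)) ` H j) \<le> J * N"
  proof -
    have "card ((\<lambda>\<phi>. (\<phi>, j)) ` H j) \<le> N" for j
    proof -
      have "card ((\<lambda>\<phi>. (\<phi>, j)) ` H j) \<le> card (H j)"
        by (rule card_image_le[OF finite_H])
      also have "\<dots> \<le> (\<Sum>i<N. card {\<phi>\<in>{..<L}. near_bumps (real \<phi>) (real L) (?x j i)})"
        unfolding H_def by (rule card_UN_le) simp
      also have "\<dots> \<le> (\<Sum>i<N. 1)"
        by (intro sum_mono card_phases_near_bumps_le_1 assms(1))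
      finally show ?thesis
        by simp
    qed
    then have "(\<Sum>j<J. card ((\<lambda>\<phi>. (\<phi>, j)) ` H j)) \<le> J * N"
      using sum_mono[of "{..<J}" "\<lambda>j. card ((\<lambda>\<phi>. (\<phi>, j)) ` H j)" "\<lambda>_. N"] by simp
    then show ?thesis
      using card_UN_le[of "{..<J}" "\<lambda>j. (\<lambda>\<phi>. (\<phi>, j)) ` H j"] by simp
  qed
  also have "card ({..<L} \<times> V) \<le> L * 2^N"
    using card_ramp_hits[OF assms(2), of J N alg u] unfolding V_def
    by (simp add: card_cartesian_product)
  finally show ?thesis
    by simp
qed

section \<open>Averaging over the seed\<close>

lemma (in prob_space) sum_prob_le_max_overlap:
  assumes "finite I" "\<And>p. p \<in> I \<Longrightarrow> E p \<in> events"
    and "\<And>u. u \<in> space M \<Longrightarrow> card {p\<in>I. u \<in> E p} \<le> K"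
  shows "(\<Sum>p\<in>I. prob (E p)) \<le> K"
proof -
  have integrable: "integrable M (indicator (E p) :: 'a \<Rightarrow> real)" if "p \<in> I" for p
    using assms(2)[OF that] by (intro integrable_real_indicator) (auto simp: less_top[symmetric])
  have "(\<Sum>p\<in>I. prob (E p)) = expectation (\<lambda>u. \<Sum>p\<in>I. indicator (E p) u)"
    using assms(2) integrable by (simp add: Bochner_Integration.integral_sum Int_absorb2 sets.sets_into_space)
  also have "\<dots> \<le> expectation (\<lambda>_. real K)"
  proof (rule integral_mono)
    show "integrable M (\<lambda>u. \<Sum>p\<in>I. indicator (E p) u :: real)"
      using integrable by auto
    fix u assume "u \<in> space M"
    have "(\<Sum>p\<in>I. indicator (E p) u :: real) = real (card {p\<in>I. u \<in> E p})"
      using sum.inter_filter[OF assms(1), of "\<lambda>_. 1::real" "\<lambda>p. u \<in> E p"]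
      by (simp add: indicator_def of_bool_def)
    then show "(\<Sum>p\<in>I. indicator (E p) u :: real) \<le> real K"
      using assms(3)[OF \<open>u \<in> space M\<close>] by simp
  qed simp
  also have "\<dots> = K"
    by (simp add: prob_space)
  finally show ?thesis .
qed

lemma query_count_ge_of_period:
  fixes M :: "'u measure" and L N :: nat
  assumes "prob_space M" "1 \<le> L" "\<epsilon> \<le> 1 / (8 * real L)"
    and success: "\<And>f. f \<in> Fclass 1 1 \<Longrightarrow> 1/2 \<le> measure M {u \<in> space M. finds_stationary alg f \<epsilon> N u}"
  shows "3 * real L / 8 \<le> real N"
proof -
  interpret prob_space M
    by (rule assms(1))
  define g where "g = 1 / (8 * real L)"
  define J :: nat where "J = 8 * 2^N"
  define I where "I = {..<L} \<times> {..<J}"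
  define E where "E = (\<lambda>(\<phi>, j). {u \<in> space M. finds_stationary alg (hard_fun g (real \<phi>) (real L) (real j)) \<epsilon> N u})"
  have gL: "g * real L = 1/8" and "g \<le> 1/2"
    using assms(2) unfolding g_def by (simp_all add: field_simps)
  have prob_E: "1/2 \<le> prob (E p)" if p_in: "p \<in> I" for p
  proof -
    obtain \<phi> j where p: "p = (\<phi>, j)" "\<phi> < L" "j < J"
      using p_in unfolding I_def by blast
    then have "hard_fun g (real \<phi>) (real L) (real j) \<in> Fclass 1 1"
      using gL assms(2) by (intro hard_fun_in_Fclass) auto
    then show ?thesis
      unfolding E_def p(1) case_prod_conv by (rule success)
  qed
  have "real (card I) * (1/2) \<le> (\<Sum>p\<in>I. prob (E p))"
    using sum_mono[of I "\<lambda>_. 1/2" "\<lambda>p. prob (E p)"] prob_E by simp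
  also have "\<dots> \<le> real (J * N + L * 2^N)"
  proof (rule sum_prob_le_max_overlap)
    show "finite I"
      unfolding I_def by simp
    show "E p \<in> events" if "p \<in> I" for p
      using prob_E[OF that] measure_notin_sets[of "E p" M] by force
    fix u assume "u \<in> space M"
    then have "{p \<in> I. u \<in> E p} = {(\<phi>, j) \<in> {..<L} \<times> {..<J}.
        finds_stationary alg (hard_fun g (real \<phi>) (real L) (real j)) \<epsilon> N u}"
      unfolding I_def E_def by auto
    also have "card \<dots> \<le> J * N + L * 2^N"
      using assms(3) unfolding g_def[symmetric]
      by (rule card_finds_stationary_hard_fun[OF assms(2) \<open>g \<le> 1/2\<close>])
    finally show "card {p \<in> I. u \<in> E p} \<le> J * N + L * 2^N" .
  qed
  finally have "real L * real J / 2 \<le> real J * real N + real L * real J / 8"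
    unfolding I_def J_def by (simp add: card_cartesian_product)
  then have "real J * (3 * real L / 8) \<le> real J * real N"
    by (simp add: algebra_simps)
  then show ?thesis
    unfolding J_def by simp
qed

lemma C_rand_lower_bound:
  assumes "\<And>(M :: real measure) alg N. rand_alg M alg \<Longrightarrow>
      \<forall>f\<in>Fclass \<beta> \<Delta>. 1/2 \<le> measure M {u \<in> space M. finds_stationary alg f \<epsilon> N u} \<Longrightarrow> b \<le> real N"
    and "C_rand \<epsilon> \<beta> \<Delta> \<le> enat n"
  shows "b \<le> real n"
proof -
  have "enat (nat \<lceil>b\<rceil>) \<le> C_rand \<epsilon> \<beta> \<Delta>"
    unfolding C_rand_def
  proof (rule Inf_greatest, clarify)
    fix N and M :: "real measure" and alg
    assume "rand_alg M alg" and "\<forall>f\<in>Fclass \<beta> \<Delta>.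
      1/2 \<le> measure M {u \<in> space M. \<exists>i<N. \<bar>deriv f (queries alg f u N ! i)\<bar> < \<epsilon>}"
    then have "b \<le> real N"
      by (rule assms(1)[unfolded finds_stationary_def])
    then show "enat (nat \<lceil>b\<rceil>) \<le> enat N"
      by simp
  qed
  then have "enat (nat \<lceil>b\<rceil>) \<le> enat n"
    using assms(2) by (rule order_trans)
  then have "nat \<lceil>b\<rceil> \<le> n"
    by simp
  then show ?thesis
    by linarith
qed

lemma exists_period:
  assumes "0 < \<epsilon>" "\<epsilon> \<le> 1/8"
  obtains L :: nat where "1 \<le> L" "\<epsilon> \<le> 1 / (8 * real L)" "1 / (16 * \<epsilon>) \<le> real L"
proof
  define t where "t = 1 / (8 * \<epsilon>)"
  have "1 \<le> t"
    using assms unfolding t_def by (simp add: field_simps)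
  show "1 \<le> nat \<lfloor>t\<rfloor>"
    using \<open>1 \<le> t\<close> by linarith
  have "\<epsilon> * (8 * real (nat \<lfloor>t\<rfloor>)) \<le> \<epsilon> * (8 * t)"
    using \<open>1 \<le> t\<close> assms(1) by (intro mult_left_mono) linarith+
  also have "\<dots> = 1"
    using assms(1) unfolding t_def by simp
  finally have "\<epsilon> * (8 * real (nat \<lfloor>t\<rfloor>)) \<le> 1" .
  moreover have "0 < 8 * real (nat \<lfloor>t\<rfloor>)"
    using \<open>1 \<le> t\<close> by simp
  ultimately show "\<epsilon> \<le> 1 / (8 * real (nat \<lfloor>t\<rfloor>))"
    by (simp add: le_divide_eq)
  have "real (nat \<lfloor>t\<rfloor>) = real_of_int \<lfloor>t\<rfloor>" "1 \<le> real_of_int \<lfloor>t\<rfloor>"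
    using \<open>1 \<le> t\<close> by simp_all
  with real_of_int_floor_add_one_gt[of t] have "t / 2 \<le> real (nat \<lfloor>t\<rfloor>)"
    by linarith
  then show "1 / (16 * \<epsilon>) \<le> real (nat \<lfloor>t\<rfloor>)"
    unfolding t_def by simp
qed

theorem theorem2p1:
  shows "\<exists>c>0. \<forall>\<epsilon>::real. 0 < \<epsilon> \<and> \<epsilon> < 1/8 \<longrightarrow>
           (\<forall>n::nat. C_rand \<epsilon> 1 1 \<le> enat n \<longrightarrow> c / \<epsilon> \<le> real n)"
proof (intro exI[of _ "3/128"] conjI allI impI)
  fix \<epsilon> :: real and n :: nat
  assume \<epsilon>: "0 < \<epsilon> \<and> \<epsilon> < 1/8" and "C_rand \<epsilon> 1 1 \<le> enat n"
  obtain L :: nat where L: "1 \<le> L" "\<epsilon> \<le> 1 / (8 * real L)" and "1 / (16 * \<epsilon>) \<le> real L"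
    using exists_period[of \<epsilon>] \<epsilon> by auto
  then have "3/128 / \<epsilon> \<le> 3 * real L / 8"
    by (simp add: field_simps)
  also have "3 * real L / 8 \<le> real n"
  proof (rule C_rand_lower_bound[OF _ \<open>C_rand \<epsilon> 1 1 \<le> enat n\<close>])
    fix M :: "real measure" and alg N
    assume "rand_alg M alg"
      and "\<forall>f\<in>Fclass 1 1. 1/2 \<le> measure M {u \<in> space M. finds_stationary alg f \<epsilon> N u}"
    then show "3 * real L / 8 \<le> real N"
      using L unfolding rand_alg_def by (intro query_count_ge_of_period) auto
  qed
  finally show "3/128 / \<epsilon> \<le> real n" .
qed simp

end
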